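(* Let $\beta_1,\beta_2,\dots\in(0,\alpha]$, $\phi\in C^1([0,1])$, and let $\psi_j$ be as in the context. Assume $\sup_j\|\psi_j\circ\mathcal T^j\|_4<\infty$ and that $\sigma_n^2:=\int\big(\sum_{k=1}^n\phi_k\circ\mathcal T^k\big)^2dm$ satisfies $\sigma_n^2=\int\sum_{j=1}^n\psi_j^2\circ\mathcal T^j\,dm+O(1)$ and $\sigma_n^2\ge c\,n^\beta$ for some $c>0$, $\beta>\frac12$ and all large $n$. Then $$\frac{1}{\sigma_n^2}\sum_{j=1}^n\Big(\psi_j^2\circ\mathcal T^j-\mathbb E\big[\psi_j^2\circ\mathcal T^j\,\big|\,\mathcal B_{j+1}\big]\Big)\to0\quad\text{in probability with respect to }m.$$
   Context: For $0<\gamma<1$ let $T_\gamma(x)=x+2^\gamma x^{1+\gamma}$ on $[0,1/2]$ and $T_\gamma(x)=2x-1$ on $(1/2,1]$; $0<\alpha<1$ fixed. $m$ is Lebesgue measure on $[0,1]$, $\|\cdot\|_p$ the $L^p(m)$ norm, and conditional expectations are with respect to $m$. $\mathcal B$ is the Borel $\sigma$-algebra of $[0,1]$. $P_\gamma$ is the transfer operator of $T_\gamma$ w.r.t. $m$: $\int(P_\gamma f)g\,dm=\int f\,(g\circ T_\gamma)\,dm$. Write $T_k=T_{\beta_k}$, $P_k=P_{\beta_k}$, $\mathcal T^n=T_n\circ\cdots\circ T_1$, $\mathcal P^n=P_n\circ\cdots\circ P_1$, $\mathcal P^0=\mathrm{id}$, $\mathcal P_k^{j}=P_{k+j-1}\circ\cdots\circ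 P_k$, and $\mathcal B_n=(\mathcal T^n)^{-1}\mathcal B$. $\mathbf1$ is the constant function. Put $\phi_k=\phi-\int\phi\circ\mathcal T^k\,dm$ ($k\ge1$), $\phi_0=0$, $H_n=\frac{1}{\mathcal P^n\mathbf 1}\sum_{\ell=0}^{n-1}\mathcal P_{\ell+1}^{\,n-\ell}(\phi_\ell\,\mathcal P^\ell\mathbf 1)$, and $\psi_n=\phi_n+H_n-H_{n+1}\circ T_{n+1}$. *)

theory Defs
  imports "HOL-Probability.Probability"
begin

definition mI :: "real measure" where
  "mI = restrict_space lborel {0..1}"

definition LSV :: "real \<Rightarrow> real \<Rightarrow> real" where
  "LSV \<gamma> x = (if x \<le> 1/2 then x + 2 powr \<gamma> * x powr (1 + \<gamma>) else 2 * x - 1)"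

definition transfer :: "real \<Rightarrow> (real \<Rightarrow> real) \<Rightarrow> (real \<Rightarrow> real)" where
  "transfer \<gamma> f = (SOME h. h \<in> borel_measurable mI \<and> integrable mI h \<and>
      (\<forall>g \<in> borel_measurable mI. bounded (g ` space mI) \<longrightarrow>
         (\<integral>x. h x * g x \<partial>mI) = (\<integral>x. f x * g (LSV \<gamma> x) \<partial>mI)))"

fun calT :: "(nat \<Rightarrow> real) \<Rightarrow> nat \<Rightarrow> real \<Rightarrow> real" where
  "calT \<beta> 0 = id"
| "calT \<beta> (Suc n) = LSV (\<beta> (Suc n)) \<circ> calT \<beta> n"

fun calP :: "(nat \<Rightarrow> real) \<Rightarrow> nat \<Rightarrow> (real \<Rightarrow> real) \<Rightarrow> real \<Rightarrow> real" where
  "calP \<beta> 0 f = f"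
| "calP \<beta> (Suc n) f = transfer (\<beta> (Suc n)) (calP \<beta> n f)"

text \<open>P_k^j = P_(k+j-1) o ... o P_k.\<close>
fun calPk :: "(nat \<Rightarrow> real) \<Rightarrow> nat \<Rightarrow> nat \<Rightarrow> (real \<Rightarrow> real) \<Rightarrow> real \<Rightarrow> real" where
  "calPk \<beta> k 0 f = f"
| "calPk \<beta> k (Suc j) f = transfer (\<beta> (k + j)) (calPk \<beta> k j f)"

definition phik :: "(nat \<Rightarrow> real) \<Rightarrow> (real \<Rightarrow> real) \<Rightarrow> nat \<Rightarrow> real \<Rightarrow> real" where
  "phik \<beta> \<phi> k x = (if k = 0 then 0 else \<phi> x - (\<integral>y. \<phi> (calT \<beta> k y) \<partial>mI))"

definition Hn :: "(nat \<Rightarrow> real) \<Rightarrow> (real \<Rightarrow> real) \<Rightarrow> nat \<Rightarrow> real \<Rightarrow> real" where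
  "Hn \<beta> \<phi> n x = (1 / calP \<beta> n (\<lambda>_. 1) x) *
     (\<Sum>l<n. calPk \<beta> (l + 1) (n - l) (\<lambda>y. phik \<beta> \<phi> l y * calP \<beta> l (\<lambda>_. 1) y) x)"

definition psi :: "(nat \<Rightarrow> real) \<Rightarrow> (real \<Rightarrow> real) \<Rightarrow> nat \<Rightarrow> real \<Rightarrow> real" where
  "psi \<beta> \<phi> n x = phik \<beta> \<phi> n x + Hn \<beta> \<phi> n x - Hn \<beta> \<phi> (n + 1) (LSV (\<beta> (n + 1)) x)"

definition Bn :: "(nat \<Rightarrow> real) \<Rightarrow> nat \<Rightarrow> real measure" where
  "Bn \<beta> n = vimage_algebra (space mI) (calT \<beta> n) mI"

definition C1_on_unit :: "(real \<Rightarrow> real) \<Rightarrow> bool" where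
  "C1_on_unit \<phi> \<longleftrightarrow> (\<exists>D. continuous_on {0..1} D \<and>
      (\<forall>x\<in>{0..1}. (\<phi> has_real_derivative D x) (at x within {0..1})))"

definition conv_in_prob :: "real measure \<Rightarrow> (nat \<Rightarrow> real \<Rightarrow> real) \<Rightarrow> bool" where
  "conv_in_prob M X \<longleftrightarrow>
     (\<forall>\<epsilon>>0. (\<lambda>n. measure M {x \<in> space M. \<bar>X n x\<bar> > \<epsilon>}) \<longlonglongrightarrow> 0)"

end

theory Submission
  imports Defs
begin

text \<open>
  Write Y_j = \<psi>_j^2 \<circ> \<T>^j. Since \<T>^(j+1) = T_(j+1) \<circ> \<T>^j, the \<sigma>-algebras \<B>_j decrease and Y_j
  is \<B>_j-measurable, so the terms X_j = Y_j - E[Y_j | \<B>_(j+1)] are reverse martingale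
  differences: for i < j the term X_j is \<B>_(i+1)-measurable, hence orthogonal to X_i in L^2.
  Therefore \<parallel>X_1 + ... + X_n\<parallel>_2^2 = \<Sum>_j \<parallel>X_j\<parallel>_2^2 \<le> 4 n sup_j \<parallel>\<psi>_j \<circ> \<T>^j\<parallel>_4^4, and Chebyshev's
  inequality with \<sigma>_n^4 \<ge> c^2 n^(2\<beta>), 2\<beta> > 1, gives convergence to 0 in probability.

  The measure-theoretic prerequisite is that every \<psi>_j is Borel measurable, i.e. that the
  transfer operators, defined by a choice, produce integrable functions. This holds because the
  LSV maps are nonsingular, so P_\<gamma> f exists as a Radon-Nikodym derivative.
\<close>

lemma integrable_mult_bounded:
  fixes f g :: "'a \<Rightarrow> real"
  assumes "integrable M f" "g \<in> borel_measurable M" "\<And>x. x \<in> space M \<Longrightarrow> \<bar>g x\<bar> \<le> B"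
  shows "integrable M (\<lambda>x. g x * f x)"
proof (rule Bochner_Integration.integrable_bound[where f="\<lambda>x. B * f x"])
  show "integrable M (\<lambda>x. B * f x)" using assms(1) by simp
  show "(\<lambda>x. g x * f x) \<in> borel_measurable M" using assms(1,2) by simp
  have "\<bar>g x\<bar> * \<bar>f x\<bar> \<le> \<bar>B\<bar> * \<bar>f x\<bar>" if "x \<in> space M" for x
    using assms(3)[OF that] by (intro mult_right_mono) auto
  then show "AE x in M. norm (g x * f x) \<le> norm (B * f x)" by (simp add: abs_mult)
qed

lemma integrable_mult_of_square_integrable:
  fixes f g :: "'a \<Rightarrow> real"
  assumes "f \<in> borel_measurable M" "g \<in> borel_measurable M"
    and "integrable M (\<lambda>x. (f x)\<^sup>2)" "integrable M (\<lambda>x. (g x)\<^sup>2)"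
  shows "integrable M (\<lambda>x. f x * g x)"
proof (rule Bochner_Integration.integrable_bound[where f="\<lambda>x. (f x)\<^sup>2 + (g x)\<^sup>2"])
  show "integrable M (\<lambda>x. (f x)\<^sup>2 + (g x)\<^sup>2)" using assms by simp
  show "(\<lambda>x. f x * g x) \<in> borel_measurable M" using assms by simp
  have "\<bar>a * b\<bar> \<le> a\<^sup>2 + b\<^sup>2" for a b :: real
  proof -
    have "2 * (\<bar>a\<bar> * \<bar>b\<bar>) \<le> a\<^sup>2 + b\<^sup>2"
      using sum_squares_bound[of "\<bar>a\<bar>" "\<bar>b\<bar>"] by (simp add: mult.assoc)
    moreover have "0 \<le> \<bar>a\<bar> * \<bar>b\<bar>" by simp
    ultimately show ?thesis unfolding abs_mult by linarith
  qed
  then show "AE x in M. norm (f x * g x) \<le> norm ((f x)\<^sup>2 + (g x)\<^sup>2)" by simp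
qed

lemma integral_square_sum_orthogonal:
  fixes X :: "'i \<Rightarrow> 'a \<Rightarrow> real"
  assumes "finite I"
    and measurable: "\<And>i. i \<in> I \<Longrightarrow> X i \<in> borel_measurable M"
    and square_integrable: "\<And>i. i \<in> I \<Longrightarrow> integrable M (\<lambda>x. (X i x)\<^sup>2)"
    and orthogonal: "\<And>i j. i \<in> I \<Longrightarrow> j \<in> I \<Longrightarrow> i \<noteq> j \<Longrightarrow> (\<integral>x. X i x * X j x \<partial>M) = 0"
  shows "integrable M (\<lambda>x. (\<Sum>i\<in>I. X i x)\<^sup>2)"
    and "(\<integral>x. (\<Sum>i\<in>I. X i x)\<^sup>2 \<partial>M) = (\<Sum>i\<in>I. \<integral>x. (X i x)\<^sup>2 \<partial>M)"
proof -
  have expand: "(\<Sum>i\<in>I. X i x)\<^sup>2 = (\<Sum>i\<in>I. \<Sum>j\<in>I. X i x * X j x)" for x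
    by (simp add: power2_eq_square sum_product)
  have products: "integrable M (\<lambda>x. X i x * X j x)" if "i \<in> I" "j \<in> I" for i j
    using integrable_mult_of_square_integrable measurable square_integrable that by blast
  then show "integrable M (\<lambda>x. (\<Sum>i\<in>I. X i x)\<^sup>2)"
    unfolding expand by (intro Bochner_Integration.integrable_sum) auto
  have "(\<integral>x. (\<Sum>i\<in>I. X i x)\<^sup>2 \<partial>M) = (\<Sum>i\<in>I. \<Sum>j\<in>I. \<integral>x. X i x * X j x \<partial>M)"
    unfolding expand using products
    by (simp add: Bochner_Integration.integral_sum Bochner_Integration.integrable_sum)
  also have "\<dots> = (\<Sum>i\<in>I. \<integral>x. X i x * X i x \<partial>M)"
  proof (rule sum.cong[OF refl])
    fix i assume "i \<in> I"
    then show "(\<Sum>j\<in>I. \<integral>x. X i x * X j x \<partial>M) = (\<integral>x. X i x * X i x \<partial>M)"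
      using \<open>finite I\<close> orthogonal by (subst sum.remove[of I i]) (auto intro!: sum.neutral)
  qed
  finally show "(\<integral>x. (\<Sum>i\<in>I. X i x)\<^sup>2 \<partial>M) = (\<Sum>i\<in>I. \<integral>x. (X i x)\<^sup>2 \<partial>M)"
    by (simp add: power2_eq_square)
qed

lemma integral_power4_le_of_nn_integral:
  fixes f :: "'a \<Rightarrow> real"
  assumes "f \<in> borel_measurable M" "(\<integral>\<^sup>+x. ennreal (\<bar>f x\<bar> ^ 4) \<partial>M) \<le> ennreal C" "0 \<le> C"
  shows "integrable M (\<lambda>x. ((f x)\<^sup>2)\<^sup>2)" and "(\<integral>x. ((f x)\<^sup>2)\<^sup>2 \<partial>M) \<le> C"
proof -
  have power4: "((f x)\<^sup>2)\<^sup>2 = \<bar>f x\<bar> ^ 4" for x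
    by (simp flip: power_mult power_abs)
  show "integrable M (\<lambda>x. ((f x)\<^sup>2)\<^sup>2)"
    using assms(1,2) by (simp add: power4 integrable_iff_bounded le_less_trans)
  have "(\<integral>x. ((f x)\<^sup>2)\<^sup>2 \<partial>M) = enn2real (\<integral>\<^sup>+x. ennreal (\<bar>f x\<bar> ^ 4) \<partial>M)"
    using assms(1) by (simp add: power4 integral_eq_nn_integral)
  also have "\<dots> \<le> C"
    using assms(3,2) by (rule enn2real_leI)
  finally show "(\<integral>x. ((f x)\<^sup>2)\<^sup>2 \<partial>M) \<le> C" .
qed

section \<open>Reverse martingale differences\<close>

lemma measurable_from_smaller_subalg:
  assumes "subalgebra M A" "subalgebra M B" "sets B \<subseteq> sets A" "f \<in> B \<rightarrow>\<^sub>M N"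
  shows "f \<in> A \<rightarrow>\<^sub>M N"
  using assms by (intro measurable_from_subalg[of A B]) (auto simp: subalgebra_def)

context sigma_finite_subalgebra
begin

lemma integral_mult_diff_real_cond_exp_eq_0:
  fixes Y Z :: "'a \<Rightarrow> real"
  assumes "integrable M (\<lambda>x. Z x * Y x)" "Z \<in> borel_measurable F" "Y \<in> borel_measurable M"
  shows "(\<integral>x. Z x * (Y x - real_cond_exp M F Y x) \<partial>M) = 0"
proof -
  note cond_exp = real_cond_exp_intg[OF assms]
  have "(\<integral>x. Z x * (Y x - real_cond_exp M F Y x) \<partial>M)
      = (\<integral>x. Z x * Y x \<partial>M) - (\<integral>x. Z x * real_cond_exp M F Y x \<partial>M)"
    using assms(1) cond_exp(1) by (simp add: right_diff_distrib)
  then show ?thesis using cond_exp(2) by simp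
qed

lemma real_cond_exp_diff_square_integrable:
  fixes Y :: "'a \<Rightarrow> real"
  assumes Y: "integrable M Y" and Y_square: "integrable M (\<lambda>x. (Y x)\<^sup>2)"
  shows "integrable M (\<lambda>x. (Y x - real_cond_exp M F Y x)\<^sup>2)"
    and "(\<integral>x. (Y x - real_cond_exp M F Y x)\<^sup>2 \<partial>M) \<le> 4 * (\<integral>x. (Y x)\<^sup>2 \<partial>M)"
proof -
  define E where "E = real_cond_exp M F Y"
  have E_square: "integrable M (\<lambda>x. (E x)\<^sup>2)"
    unfolding E_def
    by (rule integrable_convex_cond_exp[where I=UNIV and q=power2, OF Y])
       (auto simp: Y_square convex_power2)
  have jensen: "AE x in M. (E x)\<^sup>2 \<le> real_cond_exp M F (\<lambda>x. (Y x)\<^sup>2) x"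
    unfolding E_def
    by (rule real_cond_exp_jensens_inequality(2)[where I=UNIV and q=power2, OF Y])
       (auto simp: Y_square convex_power2)
  have "(\<integral>x. (E x)\<^sup>2 \<partial>M) \<le> (\<integral>x. real_cond_exp M F (\<lambda>x. (Y x)\<^sup>2) x \<partial>M)"
    by (rule integral_mono_AE[OF E_square real_cond_exp_int(1)[OF Y_square] jensen])
  also have "\<dots> = (\<integral>x. (Y x)\<^sup>2 \<partial>M)" by (rule real_cond_exp_int(2)[OF Y_square])
  finally have E_le: "(\<integral>x. (E x)\<^sup>2 \<partial>M) \<le> (\<integral>x. (Y x)\<^sup>2 \<partial>M)" .
  have pointwise: "(Y x - E x)\<^sup>2 \<le> 2 * (Y x)\<^sup>2 + 2 * (E x)\<^sup>2" for x
    using zero_le_power2[of "Y x + E x"] by (simp add: power2_eq_square algebra_simps)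
  have diff_square: "integrable M (\<lambda>x. (Y x - E x)\<^sup>2)"
  proof (rule Bochner_Integration.integrable_bound[where f="\<lambda>x. 2 * (Y x)\<^sup>2 + 2 * (E x)\<^sup>2"])
    show "integrable M (\<lambda>x. 2 * (Y x)\<^sup>2 + 2 * (E x)\<^sup>2)" using Y_square E_square by simp
    show "(\<lambda>x. (Y x - E x)\<^sup>2) \<in> borel_measurable M"
      using Y borel_measurable_cond_exp2 unfolding E_def by simp
    show "AE x in M. norm ((Y x - E x)\<^sup>2) \<le> norm (2 * (Y x)\<^sup>2 + 2 * (E x)\<^sup>2)"
      using pointwise by simp
  qed
  then show "integrable M (\<lambda>x. (Y x - real_cond_exp M F Y x)\<^sup>2)" by (simp add: E_def)
  have "(\<integral>x. (Y x - E x)\<^sup>2 \<partial>M) \<le> (\<integral>x. 2 * (Y x)\<^sup>2 + 2 * (E x)\<^sup>2 \<partial>M)"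
    using diff_square Y_square E_square pointwise by (intro integral_mono) simp_all
  also have "\<dots> \<le> 4 * (\<integral>x. (Y x)\<^sup>2 \<partial>M)" using Y_square E_square E_le by simp
  finally show "(\<integral>x. (Y x - real_cond_exp M F Y x)\<^sup>2 \<partial>M) \<le> 4 * (\<integral>x. (Y x)\<^sup>2 \<partial>M)"
    by (simp add: E_def)
qed

end

context finite_measure
begin

lemma integral_square_sum_reverse_martingale_diff_le:
  fixes Y :: "nat \<Rightarrow> 'a \<Rightarrow> real" and F :: "nat \<Rightarrow> 'a measure"
  assumes "finite J"
    and subalgebra: "\<And>j. sigma_finite_subalgebra M (F j)"
    and decreasing: "\<And>i j. i \<le> j \<Longrightarrow> sets (F j) \<subseteq> sets (F i)"
    and adapted: "\<And>j. j \<in> J \<Longrightarrow> Y j \<in> borel_measurable (F j)"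
    and square_integrable: "\<And>j. j \<in> J \<Longrightarrow> integrable M (\<lambda>x. (Y j x)\<^sup>2)"
    and bound: "\<And>j. j \<in> J \<Longrightarrow> (\<integral>x. (Y j x)\<^sup>2 \<partial>M) \<le> K"
  shows "integrable M (\<lambda>x. (\<Sum>j\<in>J. Y j x - real_cond_exp M (F (j + 1)) (Y j) x)\<^sup>2)"
    and "(\<integral>x. (\<Sum>j\<in>J. Y j x - real_cond_exp M (F (j + 1)) (Y j) x)\<^sup>2 \<partial>M) \<le> 4 * K * card J"
proof -
  define X where "X j x = Y j x - real_cond_exp M (F (j + 1)) (Y j) x" for j x
  have from_later: "f \<in> borel_measurable (F i)" if "i \<le> j" "f \<in> borel_measurable (F j)" for f :: "'a \<Rightarrow> real" and i j
    using measurable_from_smaller_subalg[OF _ _ decreasing[OF that(1)] that(2)]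
      sigma_finite_subalgebra.subalg[OF subalgebra] by blast
  have to_M: "f \<in> borel_measurable M" if "f \<in> borel_measurable (F j)" for f :: "'a \<Rightarrow> real" and j
    using measurable_from_subalg[OF sigma_finite_subalgebra.subalg[OF subalgebra] that] .
  have X_adapted: "X j \<in> borel_measurable (F j)" if "j \<in> J" for j
  proof -
    have "real_cond_exp M (F (j + 1)) (Y j) \<in> borel_measurable (F j)"
      by (rule from_later[of j "j + 1"])
        (simp_all add: borel_measurable_cond_exp)
    then show ?thesis unfolding X_def[abs_def] using adapted[OF that] by simp
  qed
  have X_square: "integrable M (\<lambda>x. (X j x)\<^sup>2)" "(\<integral>x. (X j x)\<^sup>2 \<partial>M) \<le> 4 * K" if "j \<in> J" for j
  proof -
    have "integrable M (Y j)"
      by (rule square_integrable_imp_integrable[OF to_M[OF adapted] square_integrable]) (use that in auto)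
    note diff = sigma_finite_subalgebra.real_cond_exp_diff_square_integrable[OF subalgebra[of "j + 1"] this
        square_integrable[OF that]]
    show "integrable M (\<lambda>x. (X j x)\<^sup>2)" using diff(1) by (simp add: X_def)
    show "(\<integral>x. (X j x)\<^sup>2 \<partial>M) \<le> 4 * K" using diff(2) bound[OF that] by (simp add: X_def)
  qed
  have orthogonal: "(\<integral>x. X j x * X i x \<partial>M) = 0" if "i \<in> J" "j \<in> J" "i < j" for i j
  proof -
    have "X j \<in> borel_measurable (F (i + 1))"
      using from_later[OF _ X_adapted[OF that(2)]] that(3) by simp
    moreover have "integrable M (\<lambda>x. X j x * Y i x)"
      using X_square(1)[OF that(2)] square_integrable[OF that(1)] to_M[OF X_adapted[OF that(2)]]
        to_M[OF adapted[OF that(1)]]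
      by (intro integrable_mult_of_square_integrable)
    ultimately show ?thesis unfolding X_def[of i]
      using sigma_finite_subalgebra.integral_mult_diff_real_cond_exp_eq_0[OF subalgebra]
        to_M[OF adapted[OF that(1)]] by blast
  qed
  have "(\<integral>x. X i x * X j x \<partial>M) = 0" if "i \<in> J" "j \<in> J" "i \<noteq> j" for i j
    using that orthogonal[of i j] orthogonal[of j i] by (cases "i < j") (auto simp: mult.commute)
  note sum = integral_square_sum_orthogonal[OF \<open>finite J\<close> to_M[OF X_adapted] X_square(1) this]
  show "integrable M (\<lambda>x. (\<Sum>j\<in>J. Y j x - real_cond_exp M (F (j + 1)) (Y j) x)\<^sup>2)"
    using sum(1) by (simp add: X_def)
  have "(\<integral>x. (\<Sum>j\<in>J. X j x)\<^sup>2 \<partial>M) = (\<Sum>j\<in>J. \<integral>x. (X j x)\<^sup>2 \<partial>M)"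
    by (rule sum(2))
  also have "\<dots> \<le> (\<Sum>j\<in>J. 4 * K)"
    using X_square(2) by (rule sum_mono)
  finally show "(\<integral>x. (\<Sum>j\<in>J. Y j x - real_cond_exp M (F (j + 1)) (Y j) x)\<^sup>2 \<partial>M) \<le> 4 * K * card J"
    by (simp add: X_def mult.commute)
qed

end

section \<open>Convergence in probability from second moments\<close>

lemma conv_in_prob_of_integral_square_tendsto_0:
  fixes M :: "real measure" and Z :: "nat \<Rightarrow> real \<Rightarrow> real"
  assumes "finite_measure M"
    and measurable: "\<And>n. Z n \<in> borel_measurable M"
    and square_integrable: "\<And>n. integrable M (\<lambda>x. (Z n x)\<^sup>2)"
    and "(\<lambda>n. \<integral>x. (Z n x)\<^sup>2 \<partial>M) \<longlonglongrightarrow> 0"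
  shows "conv_in_prob M Z"
  unfolding conv_in_prob_def
proof (intro allI impI)
  fix \<epsilon> :: real assume "0 < \<epsilon>"
  have chebyshev: "measure M {x \<in> space M. \<epsilon> < \<bar>Z n x\<bar>} \<le> (\<integral>x. (Z n x)\<^sup>2 \<partial>M) / \<epsilon>\<^sup>2" for n
  proof -
    have "{x \<in> space M. \<epsilon> \<le> \<bar>Z n x\<bar>} \<in> sets M" using measurable[of n] by measurable
    then have "measure M {x \<in> space M. \<epsilon> < \<bar>Z n x\<bar>} \<le> measure M {x \<in> space M. \<epsilon> \<le> \<bar>Z n x\<bar>}"
      by (rule finite_measure.finite_measure_mono[OF \<open>finite_measure M\<close>, rotated]) auto
    also have "\<dots> \<le> (\<integral>x. (Z n x)\<^sup>2 \<partial>M) / \<epsilon>\<^sup>2"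
      by (rule finite_measure.second_moment_method[OF \<open>finite_measure M\<close> measurable square_integrable \<open>0 < \<epsilon>\<close>])
    finally show ?thesis .
  qed
  show "(\<lambda>n. measure M {x \<in> space M. \<epsilon> < \<bar>Z n x\<bar>}) \<longlonglongrightarrow> 0"
    by (rule tendsto_sandwich[OF always_eventually always_eventually tendsto_const
          tendsto_divide_zero[OF assms(4), of "\<epsilon>\<^sup>2"]]) (simp_all add: chebyshev)
qed

lemma conv_in_prob_normalized_of_linear_second_moment:
  fixes M :: "real measure" and S :: "nat \<Rightarrow> real \<Rightarrow> real" and s :: "nat \<Rightarrow> real"
  assumes "finite_measure M"
    and measurable: "\<And>n. S n \<in> borel_measurable M"
    and square_integrable: "\<And>n. integrable M (\<lambda>x. (S n x)\<^sup>2)"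
    and second_moment: "\<And>n. (\<integral>x. (S n x)\<^sup>2 \<partial>M) \<le> A * real n"
    and "0 < c" "1/2 < b" and growth: "\<forall>\<^sub>F n in sequentially. c * real n powr b \<le> s n"
  shows "conv_in_prob M (\<lambda>n x. 1 / s n * S n x)"
proof (rule conv_in_prob_of_integral_square_tendsto_0[OF \<open>finite_measure M\<close>])
  show "(\<lambda>x. 1 / s n * S n x) \<in> borel_measurable M" for n using measurable by simp
  show "integrable M (\<lambda>x. (1 / s n * S n x)\<^sup>2)" for n
    using square_integrable[of n] by (simp add: power_divide)
  have upper: "\<forall>\<^sub>F n in sequentially. (\<integral>x. (1 / s n * S n x)\<^sup>2 \<partial>M) \<le> A / c\<^sup>2 * real n powr (1 - 2 * b)"
    using growth eventually_gt_at_top[of 0]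
  proof eventually_elim
    case (elim n)
    have scale_pos: "0 < c * real n powr b" using \<open>0 < c\<close> elim(2) by simp
    have "(\<integral>x. (1 / s n * S n x)\<^sup>2 \<partial>M) = (\<integral>x. (S n x)\<^sup>2 \<partial>M) / (s n)\<^sup>2"
      by (simp add: power_mult_distrib power_divide)
    also have "\<dots> \<le> A * real n / (c * real n powr b)\<^sup>2"
    proof (rule frac_le)
      have "0 \<le> (\<integral>x. (S n x)\<^sup>2 \<partial>M)" by simp
      then show "0 \<le> A * real n" using second_moment[of n] by linarith
      show "(c * real n powr b)\<^sup>2 \<le> (s n)\<^sup>2"
        using elim(1) scale_pos by (intro power_mono) auto
    qed (use second_moment[of n] scale_pos \<open>0 < c\<close> elim(2) in simp_all)
    also have "\<dots> = A / c\<^sup>2 * real n powr (1 - 2 * b)"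
    proof -
      have "(c * real n powr b)\<^sup>2 = c\<^sup>2 * real n powr (2 * b)"
        using elim(2) by (simp add: power_mult_distrib powr_power)
      moreover have "real n powr (1 - 2 * b) = real n / real n powr (2 * b)"
        using elim(2) by (simp add: powr_diff)
      ultimately show ?thesis by simp
    qed
    finally show ?case .
  qed
  have "(\<lambda>n. real n powr (1 - 2 * b)) \<longlonglongrightarrow> 0"
    by (rule tendsto_neg_powr) (use \<open>1/2 < b\<close> filterlim_real_sequentially in auto)
  then have "(\<lambda>n. A / c\<^sup>2 * real n powr (1 - 2 * b)) \<longlonglongrightarrow> 0"
    by (rule tendsto_mult_right_zero)
  from tendsto_sandwich[OF always_eventually upper tendsto_const this]
  show "(\<lambda>n. \<integral>x. (1 / s n * S n x)\<^sup>2 \<partial>M) \<longlonglongrightarrow> 0" by simp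
qed

section \<open>Transfer operators of nonsingular maps\<close>

context finite_measure
begin

lemma distr_density_finite_absolutely_continuous:
  fixes T :: "'a \<Rightarrow> 'a" and u :: "'a \<Rightarrow> real"
  assumes T: "T \<in> M \<rightarrow>\<^sub>M M"
    and nonsingular: "\<And>A. A \<in> null_sets M \<Longrightarrow> T -` A \<inter> space M \<in> null_sets M"
    and u: "integrable M u" and u_nonneg: "\<And>x. x \<in> space M \<Longrightarrow> 0 \<le> u x"
  defines "N \<equiv> distr (density M (\<lambda>x. ennreal (u x))) M T"
  shows "finite_measure N" and "absolutely_continuous M N"
proof -
  define D where "D = density M (\<lambda>x. ennreal (u x))"
  have [measurable]: "u \<in> borel_measurable M" using u by simp
  have T_D: "T \<in> D \<rightarrow>\<^sub>M M" using T by (simp add: D_def)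
  have emeasure_N: "emeasure N A = emeasure D (T -` A \<inter> space M)" if "A \<in> sets M" for A
    using emeasure_distr[OF T_D that] by (simp add: N_def D_def)
  have sets_N: "sets N = sets M" by (simp add: N_def)
  show "finite_measure N"
  proof (rule finite_measureI)
    have "T -` space M \<inter> space M = space M" using measurable_space[OF T] by auto
    then have "emeasure N (space N) = emeasure D (space M)"
      using emeasure_N[OF sets.top] by (simp add: N_def)
    also have "\<dots> = (\<integral>\<^sup>+x. ennreal (u x) \<partial>M)"
      unfolding D_def by (subst emeasure_density) (auto intro!: nn_integral_cong)
    also have "\<dots> = (\<integral>\<^sup>+x. ennreal (norm (u x)) \<partial>M)"
      by (rule nn_integral_cong) (simp add: u_nonneg)
    finally show "emeasure N (space N) \<noteq> \<infinity>"
      using u by (simp add: integrable_iff_bounded)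
  qed
  show "absolutely_continuous M N"
    unfolding absolutely_continuous_def
  proof
    fix A assume "A \<in> null_sets M"
    then have "T -` A \<inter> space M \<in> null_sets D"
      using nonsingular absolutely_continuousD absolutely_continuousI_density[of "\<lambda>x. ennreal (u x)" M]
      by (auto simp: D_def null_sets_def)
    then show "A \<in> null_sets N"
      using \<open>A \<in> null_sets M\<close> emeasure_N sets_N by (auto simp: null_sets_def)
  qed
qed

lemma transfer_nonneg_exists:
  fixes T :: "'a \<Rightarrow> 'a" and u :: "'a \<Rightarrow> real"
  assumes T: "T \<in> M \<rightarrow>\<^sub>M M"
    and nonsingular: "\<And>A. A \<in> null_sets M \<Longrightarrow> T -` A \<inter> space M \<in> null_sets M"
    and u: "integrable M u" and u_nonneg: "\<And>x. x \<in> space M \<Longrightarrow> 0 \<le> u x"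
  shows "\<exists>h. integrable M h \<and> (\<forall>G \<in> borel_measurable M. bounded (G ` space M) \<longrightarrow>
           (\<integral>x. h x * G x \<partial>M) = (\<integral>x. u x * G (T x) \<partial>M))"
proof -
  define D where "D = density M (\<lambda>x. ennreal (u x))"
  define N where "N = distr D M T"
  note N = distr_density_finite_absolutely_continuous[OF T nonsingular u u_nonneg, folded D_def N_def]
  interpret N: finite_measure N by (rule N(1))
  have sets_N: "sets N = sets M" by (simp add: N_def)
  have [measurable]: "u \<in> borel_measurable M" using u by simp
  have T_D: "T \<in> D \<rightarrow>\<^sub>M M" using T by (simp add: D_def)
  define h where "h x = enn2real (RN_deriv M N x)" for x
  have equation: "integrable M (\<lambda>x. h x * G x) \<and> (\<integral>x. h x * G x \<partial>M) = (\<integral>x. u x * G (T x) \<partial>M)"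
    if G [measurable]: "G \<in> borel_measurable M" and "bounded (G ` space M)" for G
  proof -
    obtain B where B: "\<And>x. x \<in> space M \<Longrightarrow> \<bar>G x\<bar> \<le> B"
      using \<open>bounded (G ` space M)\<close> by (auto simp: bounded_iff)
    have "integrable N G"
      using B by (intro N.integrable_const_bound[where B=B] AE_I2) (auto simp: N_def cong: measurable_cong_sets)
    moreover have "integral\<^sup>L N G = integral\<^sup>L D (\<lambda>x. G (T x))"
      unfolding N_def by (rule integral_distr[OF T_D G])
    moreover have "\<dots> = (\<integral>x. u x * G (T x) \<partial>M)"
      unfolding D_def using measurable_compose[OF T G] by (subst integral_density) (auto simp: u_nonneg)
    ultimately show ?thesis
      using RN_deriv_integrable[OF N.sigma_finite_measure_axioms N(2) sets_N G]
        RN_deriv_integral[OF N.sigma_finite_measure_axioms N(2) sets_N G]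
      by (simp add: h_def)
  qed
  have "bounded ((\<lambda>_. 1::real) ` space M)"
    by (rule bounded_subset[of "{1}"]) auto
  then have "integrable M h" using equation[of "\<lambda>_. 1"] by simp
  with equation show ?thesis by blast
qed

lemma transfer_exists:
  fixes T :: "'a \<Rightarrow> 'a" and f :: "'a \<Rightarrow> real"
  assumes T: "T \<in> M \<rightarrow>\<^sub>M M"
    and nonsingular: "\<And>A. A \<in> null_sets M \<Longrightarrow> T -` A \<inter> space M \<in> null_sets M"
    and f: "integrable M f"
  shows "\<exists>h. h \<in> borel_measurable M \<and> integrable M h \<and>
           (\<forall>G \<in> borel_measurable M. bounded (G ` space M) \<longrightarrow>
              (\<integral>x. h x * G x \<partial>M) = (\<integral>x. f x * G (T x) \<partial>M))"
proof -
  obtain h_pos where h_pos: "integrable M h_pos" "\<And>G. G \<in> borel_measurable M \<Longrightarrow> bounded (G ` space M) \<Longrightarrow>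
      (\<integral>x. h_pos x * G x \<partial>M) = (\<integral>x. max (f x) 0 * G (T x) \<partial>M)"
    using transfer_nonneg_exists[OF T nonsingular integrable_max[OF f integrable_zero]] by auto
  obtain h_neg where h_neg: "integrable M h_neg" "\<And>G. G \<in> borel_measurable M \<Longrightarrow> bounded (G ` space M) \<Longrightarrow>
      (\<integral>x. h_neg x * G x \<partial>M) = (\<integral>x. max (- f x) 0 * G (T x) \<partial>M)"
    using transfer_nonneg_exists[OF T nonsingular integrable_max[OF integrable_minus[OF f] integrable_zero]]
    by auto
  have "(\<integral>x. (h_pos x - h_neg x) * G x \<partial>M) = (\<integral>x. f x * G (T x) \<partial>M)"
    if G [measurable]: "G \<in> borel_measurable M" and "bounded (G ` space M)" for G
  proof -
    obtain B where B: "\<And>x. x \<in> space M \<Longrightarrow> \<bar>G x\<bar> \<le> B"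
      using \<open>bounded (G ` space M)\<close> by (auto simp: bounded_iff)
    have B_T: "\<bar>G (T x)\<bar> \<le> B" if "x \<in> space M" for x
      using B measurable_space[OF T that] by blast
    have integrable_G: "integrable M (\<lambda>x. h x * G x)" if "integrable M h" for h
      using integrable_mult_bounded[OF that G B] by (simp add: mult.commute)
    have integrable_G_T: "integrable M (\<lambda>x. g x * G (T x))" if "integrable M g" for g
      using integrable_mult_bounded[OF that measurable_compose[OF T G] B_T] by (simp add: mult.commute)
    note parts = integrable_max[OF f integrable_zero] integrable_max[OF integrable_minus[OF f] integrable_zero]
    have "(\<integral>x. (h_pos x - h_neg x) * G x \<partial>M) = (\<integral>x. h_pos x * G x \<partial>M) - (\<integral>x. h_neg x * G x \<partial>M)"
      using integrable_G[OF h_pos(1)] integrable_G[OF h_neg(1)] by (simp add: left_diff_distrib)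
    also have "\<dots> = (\<integral>x. max (f x) 0 * G (T x) \<partial>M) - (\<integral>x. max (- f x) 0 * G (T x) \<partial>M)"
      using h_pos(2) h_neg(2) that by simp
    also have "\<dots> = (\<integral>x. (max (f x) 0 - max (- f x) 0) * G (T x) \<partial>M)"
      using integrable_G_T[OF parts(1)] integrable_G_T[OF parts(2)] by (simp add: left_diff_distrib)
    also have "\<dots> = (\<integral>x. f x * G (T x) \<partial>M)"
      by (rule Bochner_Integration.integral_cong) (auto simp: max_def)
    finally show ?thesis .
  qed
  then show ?thesis
    using h_pos(1) h_neg(1) by (intro exI[of _ "\<lambda>x. h_pos x - h_neg x"]) auto
qed

end

section \<open>LSV maps on the unit interval\<close>

lemma space_mI [simp]: "space mI = {0..1}"
  by (simp add: mI_def)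

lemma sets_mI: "sets mI = sets (restrict_space borel {0..1})"
  unfolding mI_def by (rule sets_restrict_space_cong) simp

lemma finite_measure_mI: "finite_measure mI"
  unfolding mI_def by (rule finite_measureI) (simp add: emeasure_restrict_space)

interpretation mI: finite_measure mI
  by (rule finite_measure_mI)

lemma null_sets_mI_iff: "A \<in> null_sets mI \<longleftrightarrow> A \<in> sets mI \<and> negligible A"
proof (cases "A \<in> sets mI")
  case True
  then have "A \<in> sets borel" and "A \<subseteq> {0..1}"
    unfolding sets_mI by (auto simp: sets_restrict_space_iff)
  then have "emeasure mI A = emeasure lebesgue A"
    by (simp add: mI_def emeasure_restrict_space)
  with True \<open>A \<in> sets borel\<close> show ?thesis
    by (auto simp: negligible_iff_null_sets null_sets_def)
qed auto

lemma borel_measurable_mI_of_continuous_on: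
  "continuous_on {0..1} f \<Longrightarrow> f \<in> borel_measurable mI"
  unfolding measurable_cong_sets[OF sets_mI refl] by (rule borel_measurable_continuous_on_restrict)

lemma LSV_in_unit:
  assumes "0 \<le> \<gamma>" "x \<in> {0..1}"
  shows "LSV \<gamma> x \<in> {0..1}"
proof (cases "x \<le> 1/2")
  case True
  have "2 powr \<gamma> * x powr (1 + \<gamma>) \<le> 2 powr \<gamma> * (1/2) powr (1 + \<gamma>)"
    using True assms by (intro mult_left_mono powr_mono2) auto
  also have "\<dots> = 1/2"
    by (simp add: powr_add powr_divide)
  finally show ?thesis using True assms by (auto simp: LSV_def)
qed (use assms in \<open>auto simp: LSV_def\<close>)

lemma borel_measurable_LSV [measurable]: "LSV \<gamma> \<in> borel_measurable borel"
  unfolding LSV_def by measurable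

lemma LSV_measurable: "0 \<le> \<gamma> \<Longrightarrow> LSV \<gamma> \<in> mI \<rightarrow>\<^sub>M mI"
  unfolding mI_def by (intro measurable_restrict_space3) (auto intro: LSV_in_unit)

lemma negligible_vimage_of_nonzero_derivative:
  fixes T :: "real \<Rightarrow> real"
  assumes "negligible A"
    and derivative: "\<And>x. x \<in> S \<Longrightarrow> \<exists>D. D \<noteq> 0 \<and> (T has_real_derivative D) (at x)"
  shows "negligible {x \<in> S. T x \<in> A}"
proof -
  obtain D where D: "\<And>x. x \<in> S \<Longrightarrow> D x \<noteq> 0 \<and> (T has_real_derivative D x) (at x)"
    using derivative by metis
  show ?thesis
  proof (rule negligible_differentiable_vimage[OF \<open>negligible A\<close>, where f' = "\<lambda>x. (*) (D x)"])
    fix x assume "x \<in> S"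
    then show "inj ((*) (D x))" using D by (auto simp: inj_def)
    show "(T has_derivative (*) (D x)) (at x within S)"
      using D[OF \<open>x \<in> S\<close>] by (auto simp: has_field_derivative_def intro: has_derivative_at_withinI)
  qed
qed

lemma negligible_vimage_LSV:
  assumes "0 \<le> \<gamma>" "negligible A"
  shows "negligible (LSV \<gamma> -` A \<inter> {0..1})"
proof -
  have left: "negligible {x \<in> {0<..1/2}. x + 2 powr \<gamma> * x powr (1 + \<gamma>) \<in> A}"
  proof (rule negligible_vimage_of_nonzero_derivative[OF \<open>negligible A\<close>])
    fix x :: real assume "x \<in> {0<..1/2}"
    then have "((\<lambda>x. x + 2 powr \<gamma> * x powr (1 + \<gamma>)) has_real_derivative
        1 + 2 powr \<gamma> * ((1 + \<gamma>) * x powr \<gamma>)) (at x)"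
      by (auto intro!: derivative_eq_intros)
    moreover have "0 < 1 + 2 powr \<gamma> * ((1 + \<gamma>) * x powr \<gamma>)"
      using \<open>0 \<le> \<gamma>\<close> by (intro add_pos_nonneg) auto
    ultimately show "\<exists>D. D \<noteq> 0 \<and> ((\<lambda>x. x + 2 powr \<gamma> * x powr (1 + \<gamma>)) has_real_derivative D) (at x)"
      by (intro exI conjI) auto
  qed
  have right: "negligible {x \<in> {1/2<..1}. 2 * x - 1 \<in> A}"
  proof (rule negligible_vimage_of_nonzero_derivative[OF \<open>negligible A\<close>])
    fix x :: real
    have "((\<lambda>x. 2 * x - 1) has_real_derivative 2) (at x)"
      by (auto intro!: derivative_eq_intros)
    then show "\<exists>D. D \<noteq> 0 \<and> ((\<lambda>x. 2 * x - 1) has_real_derivative D) (at x)"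
      by (intro exI[of _ 2]) simp
  qed
  have "LSV \<gamma> -` A \<inter> {0..1} \<subseteq>
      {0} \<union> {x \<in> {0<..1/2}. x + 2 powr \<gamma> * x powr (1 + \<gamma>) \<in> A} \<union> {x \<in> {1/2<..1}. 2 * x - 1 \<in> A}"
    by (auto simp: LSV_def split: if_splits)
  moreover have "negligible ({0} \<union> {x \<in> {0<..1/2}. x + 2 powr \<gamma> * x powr (1 + \<gamma>) \<in> A}
      \<union> {x \<in> {1/2<..1}. 2 * x - 1 \<in> A})"
    using left right by simp
  ultimately show ?thesis by (rule negligible_subset[rotated])
qed

lemma LSV_nonsingular:
  "0 \<le> \<gamma> \<Longrightarrow> A \<in> null_sets mI \<Longrightarrow> LSV \<gamma> -` A \<inter> space mI \<in> null_sets mI"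
  using measurable_sets[OF LSV_measurable] negligible_vimage_LSV by (simp add: null_sets_mI_iff)

lemma transfer_integrable:
  assumes "0 \<le> \<gamma>" "integrable mI f"
  shows "integrable mI (transfer \<gamma> f)"
  unfolding transfer_def
  by (rule someI2_ex[OF mI.transfer_exists[OF LSV_measurable LSV_nonsingular]]) (use assms in auto)

section \<open>Non-stationary compositions\<close>

lemma calT_measurable:
  assumes "\<And>k. 1 \<le> k \<Longrightarrow> 0 \<le> \<beta> k"
  shows "calT \<beta> n \<in> mI \<rightarrow>\<^sub>M mI"
proof (induction n)
  case (Suc n)
  then show ?case using LSV_measurable[of "\<beta> (Suc n)"] assms by (simp add: measurable_comp)
qed simp

lemma calP_integrable:
  assumes "\<And>k. 1 \<le> k \<Longrightarrow> 0 \<le> \<beta> k" "integrable mI f"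
  shows "integrable mI (calP \<beta> n f)"
  by (induction n) (simp_all add: assms transfer_integrable)

lemma calPk_integrable:
  assumes "\<And>k. 1 \<le> k \<Longrightarrow> 0 \<le> \<beta> k" "integrable mI f" "1 \<le> k"
  shows "integrable mI (calPk \<beta> k j f)"
proof (induction j)
  case (Suc j)
  have "0 \<le> \<beta> (k + j)" using assms(1,3) by simp
  with Suc show ?case by (simp add: transfer_integrable)
qed (simp add: assms(2))

lemma C1_on_unit_continuous_on: "C1_on_unit \<phi> \<Longrightarrow> continuous_on {0..1} \<phi>"
  unfolding C1_on_unit_def continuous_on_eq_continuous_within
  by (metis DERIV_continuous)

lemma psi_measurable:
  assumes \<beta>: "\<And>k. 1 \<le> k \<Longrightarrow> 0 \<le> \<beta> k" and "C1_on_unit \<phi>"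
  shows "psi \<beta> \<phi> n \<in> borel_measurable mI"
proof -
  have "continuous_on {0..1} \<phi>" using \<open>C1_on_unit \<phi>\<close> by (rule C1_on_unit_continuous_on)
  then obtain B where B: "\<And>x. x \<in> {0..1} \<Longrightarrow> \<bar>\<phi> x\<bar> \<le> B"
    using compact_imp_bounded[OF compact_continuous_image] by (force simp: bounded_iff)
  have [measurable]: "\<phi> \<in> borel_measurable mI"
    using \<open>continuous_on {0..1} \<phi>\<close> by (rule borel_measurable_mI_of_continuous_on)
  have phik [measurable]: "phik \<beta> \<phi> l \<in> borel_measurable mI" for l
    unfolding phik_def by measurable
  have "\<bar>phik \<beta> \<phi> l x\<bar> \<le> B + \<bar>\<integral>y. \<phi> (calT \<beta> l y) \<partial>mI\<bar>" if "x \<in> space mI" for l x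
    using B[of x] that by (auto simp: phik_def)
  then have "integrable mI (\<lambda>y. phik \<beta> \<phi> l y * calP \<beta> l (\<lambda>_. 1) y)" for l
    by (intro integrable_mult_bounded calP_integrable[where \<beta>=\<beta>] \<beta>) auto
  then have "calPk \<beta> (l + 1) (m - l) (\<lambda>y. phik \<beta> \<phi> l y * calP \<beta> l (\<lambda>_. 1) y) \<in> borel_measurable mI"
    for l m
    using calPk_integrable[where \<beta>=\<beta>, OF \<beta>] by auto
  moreover have "calP \<beta> m (\<lambda>_. 1) \<in> borel_measurable mI" for m
    using calP_integrable[where \<beta>=\<beta> and f="\<lambda>_. 1", OF \<beta>] by auto
  ultimately have Hn [measurable]: "Hn \<beta> \<phi> m \<in> borel_measurable mI" for m
    unfolding Hn_def by measurable
  have "0 \<le> \<beta> (n + 1)" using \<beta> by simp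
  then have "(\<lambda>x. Hn \<beta> \<phi> (n + 1) (LSV (\<beta> (n + 1)) x)) \<in> borel_measurable mI"
    by (rule measurable_compose[OF LSV_measurable Hn])
  then show ?thesis unfolding psi_def[abs_def] by measurable
qed

lemma sigma_finite_subalgebra_Bn:
  assumes "\<And>k. 1 \<le> k \<Longrightarrow> 0 \<le> \<beta> k"
  shows "sigma_finite_subalgebra mI (Bn \<beta> n)"
proof (rule finite_measure_subalgebra_is_sigma_finite)
  have "subalgebra mI (Bn \<beta> n)"
    unfolding subalgebra_def Bn_def using sets_image_in_sets[OF _ calT_measurable[OF assms]] by simp
  then show "finite_measure_subalgebra mI (Bn \<beta> n)"
    by (simp add: finite_measure_subalgebra_def finite_measure_subalgebra_axioms_def finite_measure_mI)
qed

lemma calT_measurable_Bn: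
  assumes "\<And>k. 1 \<le> k \<Longrightarrow> 0 \<le> \<beta> k"
  shows "calT \<beta> n \<in> Bn \<beta> n \<rightarrow>\<^sub>M mI"
  unfolding Bn_def using measurable_space[OF calT_measurable[OF assms]]
  by (intro measurable_vimage_algebra1) auto

lemma sets_Bn_antimono:
  assumes "\<And>k. 1 \<le> k \<Longrightarrow> 0 \<le> \<beta> k" and "i \<le> j"
  shows "sets (Bn \<beta> j) \<subseteq> sets (Bn \<beta> i)"
proof (rule lift_Suc_antimono_le[of "\<lambda>n. sets (Bn \<beta> n)", OF _ \<open>i \<le> j\<close>])
  fix n
  have "calT \<beta> (Suc n) \<in> Bn \<beta> n \<rightarrow>\<^sub>M mI"
    using measurable_comp[OF calT_measurable_Bn[OF assms(1)] LSV_measurable] assms(1) by simp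
  then show "sets (Bn \<beta> (Suc n)) \<subseteq> sets (Bn \<beta> n)"
    unfolding Bn_def[of _ "Suc n"] by (rule sets_image_in_sets[rotated]) (simp add: Bn_def)
qed

theorem mainTheorem12:
  fixes \<alpha> :: real and \<beta> :: "nat \<Rightarrow> real" and \<phi> :: "real \<Rightarrow> real"
    and c b :: real
  assumes "0 < \<alpha>" "\<alpha> < 1"
    and "\<And>k. k \<ge> 1 \<Longrightarrow> \<beta> k \<in> {0<..\<alpha>}"
    and "C1_on_unit \<phi>"
    and "\<exists>C. \<forall>j\<ge>1. (\<integral>\<^sup>+x. ennreal (\<bar>psi \<beta> \<phi> j (calT \<beta> j x)\<bar> ^ 4) \<partial>mI) \<le> ennreal C"
    and "\<exists>K. \<forall>\<^sub>F n in sequentially.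
           \<bar>(\<integral>x. (\<Sum>k=1..n. phik \<beta> \<phi> k (calT \<beta> k x))\<^sup>2 \<partial>mI)
            - (\<integral>x. (\<Sum>j=1..n. (psi \<beta> \<phi> j (calT \<beta> j x))\<^sup>2) \<partial>mI)\<bar> \<le> K"
    and "c > 0" "b > 1/2"
    and "\<forall>\<^sub>F n in sequentially.
           (\<integral>x. (\<Sum>k=1..n. phik \<beta> \<phi> k (calT \<beta> k x))\<^sup>2 \<partial>mI) \<ge> c * real n powr b"
  shows "conv_in_prob mI (\<lambda>n x.
           (1 / (\<integral>y. (\<Sum>k=1..n. phik \<beta> \<phi> k (calT \<beta> k y))\<^sup>2 \<partial>mI)) *
           (\<Sum>j=1..n. (psi \<beta> \<phi> j (calT \<beta> j x))\<^sup>2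
              - real_cond_exp mI (Bn \<beta> (j + 1)) (\<lambda>y. (psi \<beta> \<phi> j (calT \<beta> j y))\<^sup>2) x))"
proof -
  have \<beta>: "\<And>k. 1 \<le> k \<Longrightarrow> 0 \<le> \<beta> k" using assms(3) by fastforce
  obtain C where C: "\<And>j. 1 \<le> j \<Longrightarrow>
      (\<integral>\<^sup>+x. ennreal (\<bar>psi \<beta> \<phi> j (calT \<beta> j x)\<bar> ^ 4) \<partial>mI) \<le> ennreal C" and "0 \<le> C"
    using assms(5) order_trans[OF _ ennreal_leI[OF max.cobounded1]] max.cobounded2 by metis
  define Y where "Y j x = (psi \<beta> \<phi> j (calT \<beta> j x))\<^sup>2" for j x
  have psi_calT: "(\<lambda>x. psi \<beta> \<phi> j (calT \<beta> j x)) \<in> borel_measurable mI" for j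
    using measurable_compose[OF calT_measurable[OF \<beta>] psi_measurable[OF \<beta> assms(4)]] .
  then have [measurable]: "Y j \<in> borel_measurable mI" for j
    unfolding Y_def[abs_def] by measurable
  have "Y j \<in> borel_measurable (Bn \<beta> j)" for j
    using measurable_compose[OF calT_measurable_Bn[OF \<beta>] psi_measurable[OF \<beta> assms(4)]]
    unfolding Y_def[abs_def] by measurable
  moreover have "integrable mI (\<lambda>x. (Y j x)\<^sup>2)" "(\<integral>x. (Y j x)\<^sup>2 \<partial>mI) \<le> C" if "1 \<le> j" for j
    using integral_power4_le_of_nn_integral[OF psi_calT C[OF that] \<open>0 \<le> C\<close>] unfolding Y_def .
  ultimately have "integrable mI (\<lambda>x. (\<Sum>j=1..n. Y j x - real_cond_exp mI (Bn \<beta> (j + 1)) (Y j) x)\<^sup>2)"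
    "(\<integral>x. (\<Sum>j=1..n. Y j x - real_cond_exp mI (Bn \<beta> (j + 1)) (Y j) x)\<^sup>2 \<partial>mI) \<le> 4 * C * real n"
    for n
    using mI.integral_square_sum_reverse_martingale_diff_le[where J="{1..n}" and F="Bn \<beta>" and Y=Y and K=C,
        OF finite_atLeastAtMost sigma_finite_subalgebra_Bn[OF \<beta>] sets_Bn_antimono[OF \<beta>]]
    by auto
  then show ?thesis
    unfolding Y_def[symmetric]
    by (intro conv_in_prob_normalized_of_linear_second_moment[OF finite_measure_mI _ _ _ assms(7,8,9)])
      (auto simp: borel_measurable_cond_exp2)
qed

end
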